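(* Let $G$ be a finite group and $X$ a finite $G$-poset. For $n\ge1$, $X^{(n)}/G$ is contractible if and only if $X'/G$ is contractible. If $X$ satisfies property (B), then $X^{(n)}/G$ is contractible if and only if $X/G$ is contractible.
   Context: Finite posets are regarded as finite $T_0$ topological spaces whose open sets are the down-sets; "contractible" refers to this topology. A finite $G$-poset is a finite poset with a right action of $G$ by order-preserving maps. $Y'$ is the poset of non-empty chains of $Y$ ordered by inclusion, $Y^{(n)}$ the $n$-th iterated subdivision. $Y/G$ is the orbit poset: $\overline{y}\le\overline{z}$ iff some representatives satisfy $y_1\le z_1$. $X$ satisfies property (B) if whenever $\{v_0,\dots,v_n\}$ and $\{v_0^{g_0},\dots,v_n^{g_n}\}$ are both chains of $X$ with $g_i\in G$, there is $g\in G$ with $v_i^{g_i}=v_i^g$ for all $i$. *)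

theory Defs
  imports "HOL-Analysis.Analysis" "HOL-Library.FSet" "HOL-Algebra.Group"
begin

definition poset_topology :: "'b set \<Rightarrow> ('b \<Rightarrow> 'b \<Rightarrow> bool) \<Rightarrow> 'b topology" where
  "poset_topology P r = topology (\<lambda>U. U \<subseteq> P \<and> (\<forall>x\<in>U. \<forall>y\<in>P. r y x \<longrightarrow> y \<in> U))"

lemma istopology_downsets:
  "istopology (\<lambda>U. U \<subseteq> P \<and> (\<forall>x\<in>U. \<forall>y\<in>P. r y x \<longrightarrow> y \<in> U))"
  unfolding istopology_def by blast

definition finite_G_poset ::
  "('g, 'm) monoid_scheme \<Rightarrow> 'a set \<Rightarrow> ('a \<Rightarrow> 'a \<Rightarrow> bool) \<Rightarrow> ('a \<Rightarrow> 'g \<Rightarrow> 'a) \<Rightarrow> bool" where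
  "finite_G_poset G X leq act \<longleftrightarrow>
     group G \<and> finite (carrier G) \<and> finite X \<and>
     (\<forall>x\<in>X. leq x x) \<and>
     (\<forall>x\<in>X. \<forall>y\<in>X. leq x y \<and> leq y x \<longrightarrow> x = y) \<and>
     (\<forall>x\<in>X. \<forall>y\<in>X. \<forall>z\<in>X. leq x y \<and> leq y z \<longrightarrow> leq x z) \<and>
     (\<forall>x\<in>X. \<forall>g\<in>carrier G. act x g \<in> X) \<and>
     (\<forall>x\<in>X. act x \<one>\<^bsub>G\<^esub> = x) \<and>
     (\<forall>x\<in>X. \<forall>g\<in>carrier G. \<forall>h\<in>carrier G. act x (g \<otimes>\<^bsub>G\<^esub> h) = act (act x g) h) \<and>
     (\<forall>x\<in>X. \<forall>y\<in>X. \<forall>g\<in>carrier G. leq x y \<longrightarrow> leq (act x g) (act y g))"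

definition gorbit :: "('g, 'm) monoid_scheme \<Rightarrow> ('b \<Rightarrow> 'g \<Rightarrow> 'b) \<Rightarrow> 'b \<Rightarrow> 'b set" where
  "gorbit G act y = (\<lambda>g. act y g) ` carrier G"

definition orbit_le :: "('b \<Rightarrow> 'b \<Rightarrow> bool) \<Rightarrow> 'b set \<Rightarrow> 'b set \<Rightarrow> bool" where
  "orbit_le r O1 O2 \<longleftrightarrow> (\<exists>y\<in>O1. \<exists>z\<in>O2. r y z)"

definition orbit_space ::
  "('g, 'm) monoid_scheme \<Rightarrow> ('b \<Rightarrow> 'g \<Rightarrow> 'b) \<Rightarrow> 'b set \<Rightarrow> ('b \<Rightarrow> 'b \<Rightarrow> bool) \<Rightarrow> 'b set topology" where
  "orbit_space G act Y r = poset_topology (gorbit G act ` Y) (orbit_le r)"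

text \<open>Level 0 elements are Pt x (x in X); level n+1 elements are Chn c,
  c a non-empty chain of level n, ordered by inclusion.\<close>

datatype 'a sdv = Pt 'a | Chn "'a sdv fset"

fun sdle :: "('a \<Rightarrow> 'a \<Rightarrow> bool) \<Rightarrow> 'a sdv \<Rightarrow> 'a sdv \<Rightarrow> bool" where
  "sdle leq (Pt a) (Pt b) = leq a b"
| "sdle leq (Chn c) (Chn d) = (c |\<subseteq>| d)"
| "sdle leq _ _ = False"

primrec sdact :: "('a \<Rightarrow> 'g \<Rightarrow> 'a) \<Rightarrow> 'a sdv \<Rightarrow> 'g \<Rightarrow> 'a sdv" where
  "sdact act (Pt a) g = Pt (act a g)"
| "sdact act (Chn c) g = Chn (fimage (\<lambda>y. sdact act y g) c)"

fun sdiv :: "nat \<Rightarrow> 'a set \<Rightarrow> ('a \<Rightarrow> 'a \<Rightarrow> bool) \<Rightarrow> 'a sdv set" where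
  "sdiv 0 X leq = Pt ` X"
| "sdiv (Suc n) X leq =
     {Chn c | c. fset c \<noteq> {} \<and> fset c \<subseteq> sdiv n X leq \<and>
                 (\<forall>x\<in>fset c. \<forall>y\<in>fset c. sdle leq x y \<or> sdle leq y x)}"

definition propB ::
  "('g, 'm) monoid_scheme \<Rightarrow> 'a set \<Rightarrow> ('a \<Rightarrow> 'a \<Rightarrow> bool) \<Rightarrow> ('a \<Rightarrow> 'g \<Rightarrow> 'a) \<Rightarrow> bool" where
  "propB G X leq act \<longleftrightarrow>
     (\<forall>(n::nat) (v::nat \<Rightarrow> 'a) (gs::nat \<Rightarrow> 'g).
        (\<forall>i\<le>n. v i \<in> X \<and> gs i \<in> carrier G) \<and>
        (\<forall>i\<le>n. \<forall>j\<le>n. leq (v i) (v j) \<or> leq (v j) (v i)) \<and>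
        (\<forall>i\<le>n. \<forall>j\<le>n. leq (act (v i) (gs i)) (act (v j) (gs j)) \<or>
                        leq (act (v j) (gs j)) (act (v i) (gs i)))
        \<longrightarrow> (\<exists>g\<in>carrier G. \<forall>i\<le>n. act (v i) (gs i) = act (v i) g))"

end

theory Submission
  imports Defs "HOL-Algebra.Multiplicative_Group"
begin

text \<open>A finite poset is contractible iff its identity is joined to a constant map by a fence of
  pointwise comparable monotone maps (Stong). Hence removing a beat point does not affect
  contractibility, and a poset without beat points is contractible only if it has at most one point.
  Removing a beat point \<open>x\<close> of \<open>P\<close> induces a retraction of the chain poset \<open>P'\<close> onto
  \<open>(P - {x})'\<close> that is fence-connected to the identity, while for \<open>P\<close> without beat points every
  map fence-connected to the identity of \<open>P'\<close> fixes all singletons; by induction on \<open>|P|\<close>, \<open>P'\<close>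
  is contractible iff \<open>P\<close> is.

  For a finite G-poset \<open>Y\<close> with property (B), mapping a chain to its set of orbits is an
  isomorphism \<open>Y'/G \<cong> (Y/G)'\<close>. Every subdivision \<open>Y'\<close> has property (B): comparable chains of
  chains are nested, and distinct elements of a chain lie in distinct orbits, so the largest
  chain determines one translating element for all. Therefore \<open>X^(n+1)/G \<cong> (X^(n)/G)'\<close> is
  contractible iff \<open>X^(n)/G\<close> is when \<open>X^(n)\<close> has (B), i.e. for \<open>n \<ge> 1\<close>, and also for \<open>n = 0\<close>
  if \<open>X\<close> has (B).\<close>

section \<open>Finite posets and fences of monotone maps\<close>

locale poset_on =
  fixes S :: "'b set" and leq :: "'b \<Rightarrow> 'b \<Rightarrow> bool"
  assumes refl: "x \<in> S \<Longrightarrow> leq x x"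
    and antisym: "x \<in> S \<Longrightarrow> y \<in> S \<Longrightarrow> leq x y \<Longrightarrow> leq y x \<Longrightarrow> x = y"
    and trans: "x \<in> S \<Longrightarrow> y \<in> S \<Longrightarrow> z \<in> S \<Longrightarrow> leq x y \<Longrightarrow> leq y z \<Longrightarrow> leq x z"

locale finite_poset = poset_on +
  assumes finite: "finite S"

lemma (in poset_on) poset_on_dual: "poset_on S (\<lambda>x y. leq y x)"
  by unfold_locales (auto intro: antisym trans refl)

lemma (in poset_on) poset_on_subset: "S' \<subseteq> S \<Longrightarrow> poset_on S' leq"
  by unfold_locales (auto intro: antisym trans refl)

lemma (in finite_poset) finite_poset_dual: "finite_poset S (\<lambda>x y. leq y x)"
  by (intro finite_poset.intro poset_on_dual) (unfold_locales, rule finite)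

lemma (in finite_poset) finite_poset_subset: "S' \<subseteq> S \<Longrightarrow> finite_poset S' leq"
  using poset_on_subset finite finite_subset by (simp add: finite_poset_def finite_poset_axioms_def)

lemma (in finite_poset) has_maximal:
  assumes "A \<subseteq> S" and "A \<noteq> {}"
  shows "\<exists>m\<in>A. \<forall>a\<in>A. leq m a \<longrightarrow> a = m"
proof -
  have "finite A" using assms(1) finite finite_subset by blast
  then show ?thesis
    using assms(2,1)
  proof (induction A rule: finite_ne_induct)
    case (insert a A)
    then obtain m where m: "m \<in> A" "\<forall>b\<in>A. leq m b \<longrightarrow> b = m" by auto
    show ?case
    proof (cases "leq m a")
      case True
      then have "\<forall>b\<in>insert a A. leq a b \<longrightarrow> b = a"
        using m insert.prems by (metis antisym insert_iff insert_subset subsetD trans)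
      then show ?thesis by blast
    qed (use m in auto)
  qed simp
qed

definition monotone_endo :: "'b set \<Rightarrow> ('b \<Rightarrow> 'b \<Rightarrow> bool) \<Rightarrow> ('b \<Rightarrow> 'b) \<Rightarrow> bool" where
  "monotone_endo S leq f \<longleftrightarrow> f ` S \<subseteq> S \<and> monotone_on S leq leq f"

definition endo_le :: "'b set \<Rightarrow> ('b \<Rightarrow> 'b \<Rightarrow> bool) \<Rightarrow> ('b \<Rightarrow> 'b) \<Rightarrow> ('b \<Rightarrow> 'b) \<Rightarrow> bool" where
  "endo_le S leq f g \<longleftrightarrow> monotone_endo S leq f \<and> monotone_endo S leq g \<and> (\<forall>x\<in>S. leq (f x) (g x))"

definition fence :: "'b set \<Rightarrow> ('b \<Rightarrow> 'b \<Rightarrow> bool) \<Rightarrow> ('b \<Rightarrow> 'b) \<Rightarrow> ('b \<Rightarrow> 'b) \<Rightarrow> bool" where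
  "fence S leq = (\<lambda>f g. endo_le S leq f g \<or> endo_le S leq g f)\<^sup>*\<^sup>*"

definition fence_contractible :: "'b set \<Rightarrow> ('b \<Rightarrow> 'b \<Rightarrow> bool) \<Rightarrow> bool" where
  "fence_contractible S leq \<longleftrightarrow> S = {} \<or> (\<exists>c\<in>S. fence S leq id (\<lambda>_. c))"

lemma monotone_endo_id: "monotone_endo S leq id"
  by (simp add: monotone_endo_def monotone_on_def)

lemma fence_trans: "fence S leq f g \<Longrightarrow> fence S leq g h \<Longrightarrow> fence S leq f h"
  unfolding fence_def by (rule rtranclp_trans)

lemma fence_sym: "fence S leq f g \<Longrightarrow> fence S leq g f"
  unfolding fence_def by (rule symp_rtranclp[unfolded symp_def, rule_format]) (auto simp: symp_def)

lemma fence_if_le: "endo_le S leq f g \<Longrightarrow> fence S leq f g"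
  by (simp add: fence_def r_into_rtranclp)

lemma fence_if_ge: "endo_le S leq g f \<Longrightarrow> fence S leq f g"
  by (simp add: fence_def r_into_rtranclp)

lemma fence_map:
  assumes "\<And>f g. endo_le S leq f g \<Longrightarrow> endo_le S' leq' (\<Phi> f) (\<Phi> g)" and "fence S leq f g"
  shows "fence S' leq' (\<Phi> f) (\<Phi> g)"
  using assms(2) unfolding fence_def
proof (induction rule: rtranclp_induct)
  case (step h k)
  then have "endo_le S' leq' (\<Phi> h) (\<Phi> k) \<or> endo_le S' leq' (\<Phi> k) (\<Phi> h)"
    using assms(1) by blast
  with step.IH show ?case by (metis (mono_tags, lifting) rtranclp.rtrancl_into_rtrancl)
qed simp

lemma monotone_endo_comp_right:
  assumes "monotone_endo S' leq f" and "monotone_on S leq leq r" "r ` S \<subseteq> S'" "S' \<subseteq> S"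
  shows "monotone_endo S leq (f \<circ> r)"
proof -
  have "monotone_on S' leq leq f" "f ` S' \<subseteq> S'" using assms(1) by (simp_all add: monotone_endo_def)
  moreover have "(f \<circ> r) ` S \<subseteq> S"
    unfolding image_comp[symmetric] using assms(3,4) calculation(2) by blast
  ultimately show ?thesis
    using monotone_on_o[OF _ assms(2,3)] by (simp add: monotone_endo_def)
qed

lemma monotone_endo_comp_left:
  assumes "monotone_endo S leq f" and "monotone_on S leq leq r" "r ` S \<subseteq> S'" "S' \<subseteq> S"
  shows "monotone_endo S' leq (r \<circ> f)"
proof -
  have "monotone_on S' leq leq f" "f ` S' \<subseteq> S"
    using assms(1,4) monotone_on_subset unfolding monotone_endo_def by blast+
  moreover have "(r \<circ> f) ` S' \<subseteq> S'"
    unfolding image_comp[symmetric] using assms(3) calculation(2) by blast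
  ultimately show ?thesis
    using monotone_on_o[OF assms(2)] by (simp add: monotone_endo_def)
qed

lemma endo_le_comp_right:
  assumes "endo_le S' leq f g" and "monotone_on S leq leq r" "r ` S \<subseteq> S'" "S' \<subseteq> S"
  shows "endo_le S leq (f \<circ> r) (g \<circ> r)"
  using assms(1,3) monotone_endo_comp_right[OF _ assms(2-4)] unfolding endo_le_def by auto

lemma endo_le_comp_left:
  assumes "endo_le S leq f g" and "monotone_on S leq leq r" "r ` S \<subseteq> S'" "S' \<subseteq> S"
  shows "endo_le S' leq (r \<circ> f) (r \<circ> g)"
proof -
  have "leq (r (f x)) (r (g x))" if "x \<in> S'" for x
  proof -
    have "f x \<in> S" "g x \<in> S" "leq (f x) (g x)"
      using assms(1,4) that by (auto simp: endo_le_def monotone_endo_def)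
    then show ?thesis using monotone_onD[OF assms(2)] by blast
  qed
  then show ?thesis
    using assms(1) monotone_endo_comp_left[OF _ assms(2-4)] unfolding endo_le_def by auto
qed

lemma (in poset_on) fence_contractible_retract_iff:
  assumes "S' \<subseteq> S" and r: "monotone_on S leq leq r" "r ` S \<subseteq> S'" "\<forall>x\<in>S'. r x = x"
    and "fence S leq id r"
  shows "fence_contractible S' leq \<longleftrightarrow> fence_contractible S leq"
proof
  assume S': "fence_contractible S' leq"
  show "fence_contractible S leq"
  proof (cases "S' = {}")
    case True
    then show ?thesis using r(2) by (auto simp: fence_contractible_def)
  next
    case False
    then obtain c where c: "c \<in> S'" "fence S' leq id (\<lambda>_. c)"
      using S' by (auto simp: fence_contractible_def)
    have "fence S leq (id \<circ> r) ((\<lambda>_. c) \<circ> r)"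
      by (rule fence_map[OF _ c(2)]) (rule endo_le_comp_right[OF _ r(1,2) assms(1)])
    then have "fence S leq r (\<lambda>_. c)" by (simp add: o_def)
    then have "fence S leq id (\<lambda>_. c)" by (rule fence_trans[OF assms(5)])
    then show ?thesis using c assms(1) by (auto simp: fence_contractible_def)
  qed
next
  assume S: "fence_contractible S leq"
  show "fence_contractible S' leq"
  proof (cases "S = {}")
    case True
    then show ?thesis using assms(1) by (auto simp: fence_contractible_def)
  next
    case False
    then obtain c where c: "c \<in> S" "fence S leq id (\<lambda>_. c)"
      using S by (auto simp: fence_contractible_def)
    have "endo_le S' leq id r"
      using assms(1) r(2,3) by (auto simp: endo_le_def monotone_endo_def monotone_on_def refl)
    moreover have "fence S' leq (r \<circ> id) (r \<circ> (\<lambda>_. c))"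
      by (rule fence_map[OF _ c(2)]) (rule endo_le_comp_left[OF _ r(1,2) assms(1)])
    then have "fence S' leq r (\<lambda>_. r c)" by (simp add: o_def)
    ultimately have "fence S' leq id (\<lambda>_. r c)" by (rule fence_trans[OF fence_if_le])
    then show ?thesis using c r(2) by (auto simp: fence_contractible_def)
  qed
qed

lemma (in poset_on) fence_contractible_if_subsingleton:
  assumes "\<forall>a\<in>S. \<forall>b\<in>S. a = b"
  shows "fence_contractible S leq"
proof (cases "S = {}")
  case False
  then obtain c where c: "c \<in> S" by blast
  have "endo_le S leq id (\<lambda>_. c)"
    using assms c refl by (auto simp: endo_le_def monotone_endo_def monotone_on_def)
  then show ?thesis using c fence_if_le unfolding fence_contractible_def by blast
qed (simp add: fence_contractible_def)

section \<open>Beat points\<close>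

definition beat_point :: "'b set \<Rightarrow> ('b \<Rightarrow> 'b \<Rightarrow> bool) \<Rightarrow> 'b \<Rightarrow> 'b \<Rightarrow> bool" where
  "beat_point S leq x y \<longleftrightarrow> x \<in> S \<and> y \<in> S \<and> y \<noteq> x \<and>
     ((leq y x \<and> (\<forall>z\<in>S. z \<noteq> x \<and> leq z x \<longrightarrow> leq z y)) \<or>
      (leq x y \<and> (\<forall>z\<in>S. z \<noteq> x \<and> leq x z \<longrightarrow> leq y z)))"

lemma (in finite_poset) below_id_eq_id:
  assumes "\<nexists>x y. beat_point S leq x y" and "monotone_endo S leq f" and "\<forall>x\<in>S. leq (f x) x"
  shows "\<forall>x\<in>S. f x = x"
proof (rule ccontr)
  assume "\<not> (\<forall>x\<in>S. f x = x)"
  then obtain x where x: "x \<in> S" "f x \<noteq> x" and min: "\<forall>z\<in>S. f z \<noteq> z \<longrightarrow> leq z x \<longrightarrow> z = x"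
    using finite_poset.has_maximal[OF finite_poset_dual, of "{x\<in>S. f x \<noteq> x}"] by auto
  have f: "f ` S \<subseteq> S" "monotone_on S leq leq f" using assms(2) by (simp_all add: monotone_endo_def)
  have "beat_point S leq x (f x)"
    unfolding beat_point_def
  proof (intro conjI disjI1 ballI impI)
    fix z assume z: "z \<in> S" "z \<noteq> x \<and> leq z x"
    then have "f z = z" using min by blast
    moreover have "leq (f z) (f x)" using monotone_onD[OF f(2)] z x(1) by blast
    ultimately show "leq z (f x)" by simp
  qed (use x f(1) assms(3) in auto)
  with assms(1) show False by blast
qed

lemma (in finite_poset) above_id_eq_id:
  assumes "\<nexists>x y. beat_point S leq x y" and "monotone_endo S leq f" and "\<forall>x\<in>S. leq x (f x)"
  shows "\<forall>x\<in>S. f x = x"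
proof (rule finite_poset.below_id_eq_id[OF finite_poset_dual])
  show "\<nexists>x y. beat_point S (\<lambda>a b. leq b a) x y"
    using assms(1) unfolding beat_point_def by blast
  show "monotone_endo S (\<lambda>a b. leq b a) f"
    using assms(2) unfolding monotone_endo_def monotone_on_def by blast
qed (use assms(3) in blast)

lemma (in finite_poset) fence_id_eq_id:
  assumes "\<nexists>x y. beat_point S leq x y" and "fence S leq id g"
  shows "\<forall>x\<in>S. g x = x"
  using assms(2) unfolding fence_def
proof (induction rule: rtranclp_induct)
  case (step f h)
  then have "monotone_endo S leq h \<and> ((\<forall>x\<in>S. leq x (h x)) \<or> (\<forall>x\<in>S. leq (h x) x))"
    by (auto simp: endo_le_def)
  then show ?case using below_id_eq_id[OF assms(1)] above_id_eq_id[OF assms(1)] by blast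
qed simp

lemma (in finite_poset) subsingleton_if_fence_contractible:
  assumes "\<nexists>x y. beat_point S leq x y" and "fence_contractible S leq"
  shows "\<forall>a\<in>S. \<forall>b\<in>S. a = b"
proof (cases "S = {}")
  case False
  then obtain c where "fence S leq id (\<lambda>_. c)" using assms(2) by (auto simp: fence_contractible_def)
  then have "\<forall>x\<in>S. c = x" by (rule fence_id_eq_id[OF assms(1)])
  then show ?thesis by metis
qed simp

lemma (in poset_on) beat_point_comparable:
  assumes "beat_point S leq x y" and "z \<in> S" "z \<noteq> x" "leq z x \<or> leq x z"
  shows "leq z y \<or> leq y z"
  using assms unfolding beat_point_def by (metis trans)

lemma (in poset_on) monotone_beat_point_retraction:
  assumes "beat_point S leq x y"
  shows "monotone_on S leq leq (id(x := y))"
proof (rule monotone_onI)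
  fix a c assume a: "a \<in> S" and c: "c \<in> S" and ac: "leq a c"
  have xy: "x \<in> S" "y \<in> S" using assms by (auto simp: beat_point_def)
  consider (down) "leq y x" "\<forall>z\<in>S. z \<noteq> x \<and> leq z x \<longrightarrow> leq z y"
    | (up) "leq x y" "\<forall>z\<in>S. z \<noteq> x \<and> leq x z \<longrightarrow> leq y z"
    using assms unfolding beat_point_def by blast
  then show "leq ((id(x := y)) a) ((id(x := y)) c)"
  proof cases
    case down
    then show ?thesis
      using a c ac xy refl[of y] trans[of y x c] by (cases "a = x"; cases "c = x") auto
  next
    case up
    then show ?thesis
      using a c ac xy refl[of y] trans[of a x y] by (cases "a = x"; cases "c = x") auto
  qed
qed

lemma (in poset_on) fence_contractible_remove_beat_point:
  assumes "beat_point S leq x y"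
  shows "fence_contractible (S - {x}) leq \<longleftrightarrow> fence_contractible S leq"
proof (rule fence_contractible_retract_iff)
  have xy: "x \<in> S" "y \<in> S" "y \<noteq> x" "leq x y \<or> leq y x"
    using assms by (auto simp: beat_point_def)
  show "id(x := y) ` S \<subseteq> S - {x}" using xy by auto
  have "endo_le S leq id (id(x := y)) \<or> endo_le S leq (id(x := y)) id"
    using xy monotone_beat_point_retraction[OF assms] monotone_endo_id
    by (auto simp: endo_le_def monotone_endo_def refl)
  then show "fence S leq id (id(x := y))" using fence_if_le fence_if_ge by blast
qed (use monotone_beat_point_retraction[OF assms] in auto)

lemma (in finite_poset) beat_point_if_dominated_above:
  assumes "v \<in> S" "u \<in> S" "u \<noteq> v" "leq v u"
    and dom: "\<forall>z\<in>S. leq z v \<or> leq v z \<longrightarrow> leq z u \<or> leq u z"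
  shows "\<exists>x y. beat_point S leq x y"
proof -
  let ?A = "{w\<in>S. leq v w \<and> leq w u \<and> w \<noteq> u}"
  have "v \<in> ?A" using assms(1-4) refl by auto
  then obtain w where "w \<in> ?A" and max: "\<forall>z\<in>?A. leq w z \<longrightarrow> z = w"
    using has_maximal[of ?A] by blast
  then have w: "w \<in> S" "leq v w" "leq w u" "w \<noteq> u" by auto
  have "beat_point S leq w u"
    unfolding beat_point_def
  proof (intro conjI disjI2 ballI impI)
    fix z assume z: "z \<in> S" "z \<noteq> w \<and> leq w z"
    then have "leq v z" using trans[OF assms(1) w(1) z(1) w(2)] by blast
    then have "leq z u \<or> leq u z" using dom z(1) by blast
    moreover have "\<not> (leq z u \<and> z \<noteq> u)" using max z \<open>leq v z\<close> by auto
    ultimately show "leq u z" using refl[OF assms(2)] by blast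
  qed (use w assms(2) in auto)
  then show ?thesis by blast
qed

lemma (in finite_poset) beat_point_if_dominated:
  assumes "v \<in> S" "u \<in> S" "u \<noteq> v"
    and dom: "\<forall>z\<in>S. leq z v \<or> leq v z \<longrightarrow> leq z u \<or> leq u z"
  shows "\<exists>x y. beat_point S leq x y"
proof -
  have "leq v u \<or> leq u v" using dom assms(1) refl by blast
  then show ?thesis
  proof
    assume "leq u v"
    with dom obtain x y where "beat_point S (\<lambda>a b. leq b a) x y"
      using finite_poset.beat_point_if_dominated_above[OF finite_poset_dual assms(1-3)] by blast
    then show ?thesis unfolding beat_point_def by blast
  qed (use beat_point_if_dominated_above assms in blast)
qed

section \<open>The poset of chains\<close>

definition nonempty_chains :: "'b set \<Rightarrow> ('b \<Rightarrow> 'b \<Rightarrow> bool) \<Rightarrow> 'b set set" where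
  "nonempty_chains S leq = {c. c \<noteq> {} \<and> c \<subseteq> S \<and> (\<forall>a\<in>c. \<forall>b\<in>c. leq a b \<or> leq b a)}"

lemma poset_on_subset_order: "poset_on A (\<subseteq>)"
  by unfold_locales auto

lemma finite_poset_nonempty_chains:
  assumes "finite S"
  shows "finite_poset (nonempty_chains S leq) (\<subseteq>)"
proof (intro finite_poset.intro poset_on_subset_order finite_poset_axioms.intro)
  show "finite (nonempty_chains S leq)"
    by (rule finite_subset[of _ "Pow S"]) (auto simp: nonempty_chains_def assms)
qed

lemma nonempty_chains_mono: "S' \<subseteq> S \<Longrightarrow> nonempty_chains S' leq \<subseteq> nonempty_chains S leq"
  unfolding nonempty_chains_def by blast

lemma (in poset_on) singleton_in_nonempty_chains: "v \<in> S \<Longrightarrow> {v} \<in> nonempty_chains S leq"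
  using refl by (auto simp: nonempty_chains_def)

lemma (in finite_poset) nonempty_chain_has_greatest:
  assumes "c \<in> nonempty_chains S leq"
  shows "\<exists>t\<in>c. \<forall>x\<in>c. leq x t"
proof -
  have c: "c \<subseteq> S" "c \<noteq> {}" "\<forall>a\<in>c. \<forall>b\<in>c. leq a b \<or> leq b a"
    using assms by (auto simp: nonempty_chains_def)
  obtain t where "t \<in> c" "\<forall>x\<in>c. leq t x \<longrightarrow> x = t" using has_maximal[OF c(1,2)] by blast
  then show ?thesis using c refl by (metis subsetD)
qed

text \<open>For a beat point \<open>x\<close> with witness \<open>y\<close>, the retraction \<open>c \<mapsto> (c - {x}) \<union> {y}\<close> of chains through
  \<open>x\<close> is joined to the identity by \<open>c \<subseteq> c \<union> {y} \<supseteq> (c - {x}) \<union> {y}\<close>.\<close>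

lemma (in poset_on) fence_contractible_chains_remove_beat_point:
  assumes "beat_point S leq x y"
  shows "fence_contractible (nonempty_chains (S - {x}) leq) (\<subseteq>)
    \<longleftrightarrow> fence_contractible (nonempty_chains S leq) (\<subseteq>)"
proof -
  let ?K = "nonempty_chains S leq"
  define r where "r c = (if x \<in> c then insert y (c - {x}) else c)" for c
  define s where "s c = (if x \<in> c then insert y c else c)" for c
  have xy: "x \<in> S" "y \<in> S" "y \<noteq> x" "leq x y \<or> leq y x"
    using assms by (auto simp: beat_point_def)
  have s_chain: "s c \<in> ?K" if "c \<in> ?K" for c
  proof (cases "x \<in> c")
    case True
    then have "leq a y \<or> leq y a" if "a \<in> c" for a
      using that \<open>c \<in> ?K\<close> xy(4) beat_point_comparable[OF assms]
      unfolding nonempty_chains_def by blast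
    then show ?thesis using that True xy(2) refl[OF xy(2)] by (auto simp: s_def nonempty_chains_def)
  qed (use that in \<open>simp add: s_def\<close>)
  have r_chain: "r c \<in> nonempty_chains (S - {x}) leq" if "c \<in> ?K" for c
    using s_chain[OF that] that xy(3) unfolding r_def s_def nonempty_chains_def by auto
  have K': "nonempty_chains (S - {x}) leq \<subseteq> ?K" by (rule nonempty_chains_mono) blast
  have r_mono: "monotone_on ?K (\<subseteq>) (\<subseteq>) r" and s_mono: "monotone_on ?K (\<subseteq>) (\<subseteq>) s"
    by (auto simp: monotone_on_def r_def s_def)
  have "c \<subseteq> s c" "r c \<subseteq> s c" for c by (auto simp: r_def s_def)
  moreover have "monotone_endo ?K (\<subseteq>) r" "monotone_endo ?K (\<subseteq>) s"
    using r_chain K' s_chain r_mono s_mono unfolding monotone_endo_def by blast+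
  ultimately have "endo_le ?K (\<subseteq>) id s" "endo_le ?K (\<subseteq>) r s"
    using monotone_endo_id by (auto simp: endo_le_def)
  then have "fence ?K (\<subseteq>) id r"
    by (meson fence_if_ge fence_if_le fence_trans)
  show ?thesis
  proof (rule poset_on.fence_contractible_retract_iff[OF poset_on_subset_order K' r_mono])
    show "r ` ?K \<subseteq> nonempty_chains (S - {x}) leq" using r_chain by blast
    show "\<forall>c\<in>nonempty_chains (S - {x}) leq. r c = c" by (auto simp: r_def nonempty_chains_def)
  qed fact
qed

lemma (in poset_on) comparable_if_endo_le_chains:
  assumes "endo_le (nonempty_chains S leq) (\<subseteq>) f g" and "\<forall>v\<in>S. f {v} = {v}"
    and "v \<in> S" "u \<in> g {v}" "z \<in> S" "leq z v \<or> leq v z"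
  shows "leq z u \<or> leq u z"
proof -
  let ?K = "nonempty_chains S leq"
  have zv: "{z, v} \<in> ?K" using assms(3,5,6) refl by (auto simp: nonempty_chains_def)
  have f: "monotone_on ?K (\<subseteq>) (\<subseteq>) f" and g: "monotone_on ?K (\<subseteq>) (\<subseteq>) g" "g {z, v} \<in> ?K"
    and fg: "f {z, v} \<subseteq> g {z, v}"
    using assms(1) zv by (auto simp: endo_le_def monotone_endo_def)
  have "z \<in> f {z}" using assms(2,5) by simp
  also have "f {z} \<subseteq> f {z, v}"
    using monotone_onD[OF f singleton_in_nonempty_chains[OF assms(5)] zv] by blast
  also have "\<dots> \<subseteq> g {z, v}" by (rule fg)
  finally have "z \<in> g {z, v}" .
  moreover have "u \<in> g {z, v}"
    using assms(4) monotone_onD[OF g(1) singleton_in_nonempty_chains[OF assms(3)] zv] by blast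
  ultimately show ?thesis using g(2) by (auto simp: nonempty_chains_def)
qed

lemma (in finite_poset) fence_chains_fixes_singletons:
  assumes "\<nexists>x y. beat_point S leq x y" and "fence (nonempty_chains S leq) (\<subseteq>) id g"
  shows "\<forall>v\<in>S. g {v} = {v}"
  using assms(2) unfolding fence_def
proof (induction rule: rtranclp_induct)
  case (step f g)
  let ?K = "nonempty_chains S leq"
  show ?case
  proof
    fix v assume v: "v \<in> S"
    have gv: "g {v} \<in> ?K"
      using step.hyps(2) singleton_in_nonempty_chains[OF v] by (auto simp: endo_le_def monotone_endo_def)
    from step.hyps(2) have "g {v} \<subseteq> {v}"
    proof
      assume "endo_le ?K (\<subseteq>) g f"
      then show ?thesis using step.IH v singleton_in_nonempty_chains[OF v] by (auto simp: endo_le_def)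
    next
      assume le: "endo_le ?K (\<subseteq>) f g"
      show ?thesis
      proof
        fix u assume u: "u \<in> g {v}"
        then have "u \<in> S" using gv by (auto simp: nonempty_chains_def)
        with comparable_if_endo_le_chains[OF le step.IH v u] show "u \<in> {v}"
          using beat_point_if_dominated[OF v] assms(1) by blast
      qed
    qed
    then show "g {v} = {v}" using gv by (auto simp: nonempty_chains_def)
  qed
qed simp

lemma (in finite_poset) subsingleton_if_fence_contractible_nonempty_chains:
  assumes "\<nexists>x y. beat_point S leq x y" and "fence_contractible (nonempty_chains S leq) (\<subseteq>)"
  shows "\<forall>a\<in>S. \<forall>b\<in>S. a = b"
proof (cases "S = {}")
  case False
  then have "nonempty_chains S leq \<noteq> {}" using singleton_in_nonempty_chains by blast
  then obtain c where "fence (nonempty_chains S leq) (\<subseteq>) id (\<lambda>_. c)"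
    using assms(2) by (auto simp: fence_contractible_def)
  then have "\<forall>v\<in>S. c = {v}" by (rule fence_chains_fixes_singletons[OF assms(1)])
  then show ?thesis by (metis singleton_inject)
qed simp

lemma fence_contractible_nonempty_chains_if_subsingleton:
  assumes "\<forall>a\<in>S. \<forall>b\<in>S. a = b"
  shows "fence_contractible (nonempty_chains S leq) (\<subseteq>)"
proof (rule poset_on.fence_contractible_if_subsingleton[OF poset_on_subset_order])
  have "c = S" if c: "c \<in> nonempty_chains S leq" for c
  proof
    show "c \<subseteq> S" using c by (simp add: nonempty_chains_def)
    obtain p where "p \<in> c" using c unfolding nonempty_chains_def by blast
    then show "S \<subseteq> c" using assms \<open>c \<subseteq> S\<close> by (metis subsetD subsetI)
  qed
  then show "\<forall>a\<in>nonempty_chains S leq. \<forall>b\<in>nonempty_chains S leq. a = b" by metis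
qed

theorem fence_contractible_nonempty_chains_iff:
  assumes "finite_poset S leq"
  shows "fence_contractible (nonempty_chains S leq) (\<subseteq>) \<longleftrightarrow> fence_contractible S leq"
  using assms
proof (induction "card S" arbitrary: S rule: less_induct)
  case less
  interpret finite_poset S leq by (rule less.prems)
  show ?case
  proof (cases "\<exists>x y. beat_point S leq x y")
    case True
    then obtain x y where b: "beat_point S leq x y" by blast
    then have "x \<in> S" by (simp add: beat_point_def)
    then have "fence_contractible (nonempty_chains (S - {x}) leq) (\<subseteq>) \<longleftrightarrow> fence_contractible (S - {x}) leq"
      using less.hyps card_Diff1_less[OF finite] finite_poset_subset[of "S - {x}"] by blast
    then show ?thesis
      using fence_contractible_remove_beat_point[OF b] fence_contractible_chains_remove_beat_point[OF b]
      by simp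
  next
    case False
    have "fence_contractible (nonempty_chains S leq) (\<subseteq>) \<longleftrightarrow> (\<forall>a\<in>S. \<forall>b\<in>S. a = b)"
      using subsingleton_if_fence_contractible_nonempty_chains[OF False]
        fence_contractible_nonempty_chains_if_subsingleton[of S leq] by blast
    moreover have "fence_contractible S leq \<longleftrightarrow> (\<forall>a\<in>S. \<forall>b\<in>S. a = b)"
      using subsingleton_if_fence_contractible[OF False] fence_contractible_if_subsingleton by blast
    ultimately show ?thesis by (rule trans_sym)
  qed
qed

section \<open>The topology of a finite poset\<close>

lemma openin_poset_topology:
  "openin (poset_topology S leq) U \<longleftrightarrow> U \<subseteq> S \<and> (\<forall>x\<in>U. \<forall>y\<in>S. leq y x \<longrightarrow> y \<in> U)"
  by (simp add: poset_topology_def istopology_downsets)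

lemma topspace_poset_topology [simp]: "topspace (poset_topology S leq) = S"
  unfolding topspace_def by (auto simp: openin_poset_topology)

lemma (in poset_on) openin_down_set: "y \<in> S \<Longrightarrow> openin (poset_topology S leq) {z\<in>S. leq z y}"
  unfolding openin_poset_topology using trans by blast

lemma (in poset_on) continuous_map_into_poset_topology_iff:
  "continuous_map (poset_topology P r) (poset_topology S leq) f \<longleftrightarrow> f ` P \<subseteq> S \<and> monotone_on P r leq f"
proof
  assume f: "continuous_map (poset_topology P r) (poset_topology S leq) f"
  then have fP: "f ` P \<subseteq> S" by (simp add: continuous_map_def image_subset_iff_funcset)
  moreover have "leq (f x) (f y)" if "x \<in> P" "y \<in> P" "r x y" for x y
  proof -
    have "f y \<in> S" using fP that(2) by blast
    then have "openin (poset_topology P r) {z \<in> P. f z \<in> {z\<in>S. leq z (f y)}}"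
      using openin_continuous_map_preimage[OF f openin_down_set] by simp
    moreover have "f y \<in> {z\<in>S. leq z (f y)}" using fP that(2) refl by auto
    ultimately show ?thesis using that unfolding openin_poset_topology by blast
  qed
  ultimately show "f ` P \<subseteq> S \<and> monotone_on P r leq f" by (simp add: monotone_on_def)
next
  assume f: "f ` P \<subseteq> S \<and> monotone_on P r leq f"
  show "continuous_map (poset_topology P r) (poset_topology S leq) f"
    unfolding continuous_map_def
  proof (intro conjI allI impI)
    show "f \<in> topspace (poset_topology P r) \<rightarrow> topspace (poset_topology S leq)" using f by auto
    fix U assume "openin (poset_topology S leq) U"
    then show "openin (poset_topology P r) {x \<in> topspace (poset_topology P r). f x \<in> U}"
      using f unfolding openin_poset_topology monotone_on_def by auto
  qed
qed

lemma (in poset_on) continuous_map_poset_topology_iff: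
  "continuous_map (poset_topology S leq) (poset_topology S leq) f \<longleftrightarrow> monotone_endo S leq f"
  by (simp add: continuous_map_into_poset_topology_iff monotone_endo_def)

lemma homeomorphic_poset_topology:
  assumes "poset_on P r" "poset_on Q s" and F: "bij_betw F P Q"
    and iso: "\<forall>x\<in>P. \<forall>y\<in>P. r x y \<longleftrightarrow> s (F x) (F y)"
  shows "poset_topology P r homeomorphic_space poset_topology Q s"
proof -
  define F' where "F' = inv_into P F"
  have F': "F' ` Q \<subseteq> P" "\<forall>y\<in>Q. F (F' y) = y" "\<forall>x\<in>P. F' (F x) = x"
    using F unfolding F'_def by (auto simp: bij_betw_def inv_into_into f_inv_into_f)
  have "F ` P \<subseteq> Q" "monotone_on P r s F"
    using F iso by (auto simp: bij_betw_def monotone_on_def)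
  then have "continuous_map (poset_topology P r) (poset_topology Q s) F"
    by (simp add: poset_on.continuous_map_into_poset_topology_iff[OF assms(2)])
  moreover have "monotone_on Q s r F'"
    using F' iso by (auto simp: monotone_on_def image_subset_iff)
  then have "continuous_map (poset_topology Q s) (poset_topology P r) F'"
    using F'(1) by (simp add: poset_on.continuous_map_into_poset_topology_iff[OF assms(1)])
  ultimately show ?thesis
    unfolding homeomorphic_space_def homeomorphic_maps_def using F' by auto
qed

lemma homeomorphic_poset_topology_images:
  assumes P: "poset_on (p ` Y) r" and Q: "poset_on (q ` Y) s"
    and iso: "\<forall>a\<in>Y. \<forall>b\<in>Y. r (p a) (p b) \<longleftrightarrow> s (q a) (q b)"
  shows "poset_topology (p ` Y) r homeomorphic_space poset_topology (q ` Y) s"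
proof (rule homeomorphic_poset_topology[OF P Q])
  define F where "F = q \<circ> inv_into Y p"
  have inv: "inv_into Y p x \<in> Y" "p (inv_into Y p x) = x" if "x \<in> p ` Y" for x
    using that by (auto simp: inv_into_into f_inv_into_f)
  show iso_F: "\<forall>x\<in>p ` Y. \<forall>y\<in>p ` Y. r x y \<longleftrightarrow> s (F x) (F y)"
    using iso inv unfolding F_def by (metis comp_apply)
  have "F (p a) = q a" if "a \<in> Y" for a
  proof -
    have a': "inv_into Y p (p a) \<in> Y" "p (inv_into Y p (p a)) = p a" using inv[of "p a"] that by auto
    then have "r (p a) (p (inv_into Y p (p a)))" "r (p (inv_into Y p (p a))) (p a)"
      using that poset_on.refl[OF P] by simp_all
    then have "s (q a) (F (p a))" "s (F (p a)) (q a)"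
      using iso a'(1) that unfolding F_def by auto
    then show ?thesis using poset_on.antisym[OF Q] a'(1) that unfolding F_def by auto
  qed
  moreover have "inj_on F (p ` Y)"
  proof (rule inj_onI)
    fix x y assume xy: "x \<in> p ` Y" "y \<in> p ` Y" "F x = F y"
    then have "s (F x) (F y)" "s (F y) (F x)"
      using poset_on.refl[OF Q] inv unfolding F_def by auto
    then show "x = y" using iso_F xy poset_on.antisym[OF P] by blast
  qed
  ultimately show "bij_betw F (p ` Y) (q ` Y)"
    unfolding bij_betw_def by (auto simp: image_iff)
qed

lemma (in poset_on) homotopic_if_endo_le:
  assumes "endo_le S leq f g"
  shows "homotopic_with (\<lambda>_. True) (poset_topology S leq) (poset_topology S leq) f g"
proof -
  let ?T = "poset_topology S leq" and ?I = "top_of_set {0..1::real}"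
  define h where "h = (\<lambda>(t::real, x). if t < 1 then f x else g x)"
  have f: "monotone_endo S leq f" and g: "monotone_endo S leq g" and fg: "\<forall>x\<in>S. leq (f x) (g x)"
    using assms by (simp_all add: endo_le_def)
  have "openin (prod_topology ?I ?T) {p \<in> topspace (prod_topology ?I ?T). h p \<in> U}"
    if U: "openin ?T U" for U
  proof -
    have "{p \<in> topspace (prod_topology ?I ?T). h p \<in> U}
        = {0..<1} \<times> {x\<in>S. f x \<in> U} \<union> {0..1} \<times> {x\<in>S. g x \<in> U}"
      using U f fg unfolding openin_poset_topology monotone_endo_def
      by (auto simp: h_def split: if_splits)
    moreover have "openin ?I {0..<1}"
      unfolding openin_subtopology by (rule exI[of _ "{..<1}"]) auto
    moreover have "continuous_map ?T ?T f" "continuous_map ?T ?T g"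
      using f g continuous_map_poset_topology_iff by simp_all
    then have "openin ?T {x\<in>S. f x \<in> U}" "openin ?T {x\<in>S. g x \<in> U}"
      using openin_continuous_map_preimage[OF _ U] by fastforce+
    moreover have "openin ?I {0..1}" using openin_topspace[of ?I] by simp
    ultimately show ?thesis by (simp add: openin_Un openin_prod_Times_iff)
  qed
  then have "continuous_map (prod_topology ?I ?T) ?T h"
    using f g unfolding continuous_map_def monotone_endo_def by (auto simp: h_def image_subset_iff)
  then show ?thesis unfolding homotopic_with_def by (intro exI[of _ h]) (auto simp: h_def)
qed

lemma (in poset_on) homotopic_if_fence:
  assumes "fence S leq f g" and "monotone_endo S leq f"
  shows "homotopic_with (\<lambda>_. True) (poset_topology S leq) (poset_topology S leq) f g"
  using assms(1) unfolding fence_def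
proof (induction rule: rtranclp_induct)
  case base
  then show ?case using assms(2) continuous_map_poset_topology_iff by simp
next
  case (step g h)
  from step.hyps(2)
  have "homotopic_with (\<lambda>_. True) (poset_topology S leq) (poset_topology S leq) g h"
  proof
    assume "endo_le S leq h g"
    then show ?thesis by (subst homotopic_with_sym) (rule homotopic_if_endo_le)
  qed (rule homotopic_if_endo_le)
  with step.IH show ?case by (rule homotopic_with_trans)
qed

lemma (in finite_poset) openin_pointwise_below:
  assumes "\<And>x. x \<in> S \<Longrightarrow> continuous_map X (poset_topology S leq) (\<lambda>t. H t x)" and "g ` S \<subseteq> S"
  shows "openin X {t \<in> topspace X. \<forall>x\<in>S. leq (H t x) (g x)}"
proof -
  have "{t \<in> topspace X. \<forall>x\<in>S. leq (H t x) (g x)}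
      = (\<Inter>x\<in>S. {t \<in> topspace X. H t x \<in> {z\<in>S. leq z (g x)}}) \<inter> topspace X"
    using assms(1) by (auto simp: continuous_map_def Pi_iff)
  moreover have "openin X ((\<Inter>x\<in>S. {t \<in> topspace X. H t x \<in> {z\<in>S. leq z (g x)}}) \<inter> topspace X)"
    using assms openin_down_set by (intro openin_INT[OF finite] openin_continuous_map_preimage) auto
  ultimately show ?thesis by simp
qed

text \<open>Maps close to \<open>h(a, -)\<close> lie pointwise below it, since down-sets are open; so the fence class of
  \<open>h(s, -)\<close> is locally constant in \<open>s\<close>.\<close>

lemma (in finite_poset) fence_homotopy_slices:
  assumes h: "continuous_map (prod_topology (top_of_set {0..1::real}) (poset_topology S leq)) (poset_topology S leq) h"
    and "s \<in> {0..1}" "t \<in> {0..1}"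
  shows "fence S leq (\<lambda>x. h (s, x)) (\<lambda>x. h (t, x))"
proof -
  let ?T = "poset_topology S leq" and ?I = "top_of_set {0..1::real}"
  define H where "H t = (\<lambda>x. h (t, x))" for t
  have H_endo: "monotone_endo S leq (H t)" if "t \<in> {0..1}" for t
  proof -
    have "continuous_map ?T ?T (h \<circ> Pair t)"
      by (rule continuous_map_o_Pair[OF h]) (use that in simp)
    then show ?thesis
      using continuous_map_poset_topology_iff by (simp add: H_def o_def)
  qed
  have H_path: "continuous_map ?I ?T (\<lambda>t. H t x)" if "x \<in> S" for x
    unfolding H_def using that
    by (intro continuous_map_compose[OF _ h, unfolded o_def] continuous_intros) auto
  have "fence S leq (H s) (H t)"
  proof (rule connected_equivalence_relation[OF connected_Icc assms(2,3),
        where R = "\<lambda>s t. fence S leq (H s) (H t)"])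
    show "fence S leq (H b) (H a)" if "fence S leq (H a) (H b)" for a b
      using that by (rule fence_sym)
    show "fence S leq (H a) (H c)" if "fence S leq (H a) (H b)" "fence S leq (H b) (H c)" for a b c
      using that by (rule fence_trans)
  next
    fix a assume a: "a \<in> {0..1::real}"
    define W where "W = {t \<in> topspace ?I. \<forall>x\<in>S. leq (H t x) (H a x)}"
    have "openin ?I W"
      unfolding W_def using H_endo[OF a] by (intro openin_pointwise_below H_path) (auto simp: monotone_endo_def)
    moreover have "a \<in> W"
      using a H_endo[OF a] refl by (auto simp: W_def monotone_endo_def)
    moreover have "fence S leq (H a) (H t)" if "t \<in> W" for t
      using that H_endo[OF a] H_endo[of t] by (intro fence_if_ge) (auto simp: W_def endo_le_def)
    ultimately show "\<exists>W. openin ?I W \<and> a \<in> W \<and> (\<forall>t\<in>W. fence S leq (H a) (H t))"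
      by blast
  qed
  then show ?thesis by (simp add: H_def)
qed

lemma (in finite_poset) fence_if_homotopic:
  assumes "homotopic_with (\<lambda>_. True) (poset_topology S leq) (poset_topology S leq) f g"
  shows "fence S leq f g"
proof -
  obtain h where h: "continuous_map (prod_topology (top_of_set {0..1::real}) (poset_topology S leq))
      (poset_topology S leq) h"
    and h01: "\<forall>x. h (0, x) = f x" "\<forall>x. h (1, x) = g x"
    using assms unfolding homotopic_with_def by blast
  have "(\<lambda>x. h (0, x)) = f" "(\<lambda>x. h (1, x)) = g" using h01 by auto
  then show ?thesis using fence_homotopy_slices[OF h, of 0 1] by simp
qed

theorem (in finite_poset) contractible_space_iff_fence_contractible:
  "contractible_space (poset_topology S leq) \<longleftrightarrow> fence_contractible S leq"
proof -
  have "poset_topology S leq = trivial_topology \<longleftrightarrow> S = {}"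
    by (metis null_topspace_iff_trivial topspace_poset_topology)
  moreover have "homotopic_with (\<lambda>_. True) (poset_topology S leq) (poset_topology S leq) id (\<lambda>_. c)
      \<longleftrightarrow> fence S leq id (\<lambda>_. c)" for c
    using fence_if_homotopic homotopic_if_fence monotone_endo_id by blast
  ultimately show ?thesis
    unfolding contractible_space fence_contractible_def by simp
qed

corollary (in finite_poset) contractible_space_nonempty_chains_iff:
  "contractible_space (poset_topology (nonempty_chains S leq) (\<subseteq>)) \<longleftrightarrow> contractible_space (poset_topology S leq)"
  using finite_poset.contractible_space_iff_fence_contractible[OF finite_poset_nonempty_chains[OF finite]]
    contractible_space_iff_fence_contractible fence_contractible_nonempty_chains_iff[OF finite_poset_axioms]
  by simp

section \<open>Finite G-posets and their orbit posets\<close>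

locale G_poset =
  fixes G :: "('g, 'm) monoid_scheme" and Y :: "'b set"
    and leq :: "'b \<Rightarrow> 'b \<Rightarrow> bool" and act :: "'b \<Rightarrow> 'g \<Rightarrow> 'b"
  assumes G_poset: "finite_G_poset G Y leq act"
begin

sublocale finite_poset Y leq
  using G_poset unfolding finite_G_poset_def by unfold_locales blast+

sublocale G: group G
  using G_poset by (simp add: finite_G_poset_def)

lemma finite_carrier: "finite (carrier G)"
  using G_poset by (simp add: finite_G_poset_def)

lemma act_closed: "y \<in> Y \<Longrightarrow> g \<in> carrier G \<Longrightarrow> act y g \<in> Y"
  using G_poset unfolding finite_G_poset_def by blast

lemma act_one [simp]: "y \<in> Y \<Longrightarrow> act y \<one>\<^bsub>G\<^esub> = y"
  using G_poset unfolding finite_G_poset_def by blast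

lemma act_mult:
  "y \<in> Y \<Longrightarrow> g \<in> carrier G \<Longrightarrow> h \<in> carrier G \<Longrightarrow> act y (g \<otimes>\<^bsub>G\<^esub> h) = act (act y g) h"
  using G_poset unfolding finite_G_poset_def by blast

lemma act_mono: "x \<in> Y \<Longrightarrow> y \<in> Y \<Longrightarrow> g \<in> carrier G \<Longrightarrow> leq x y \<Longrightarrow> leq (act x g) (act y g)"
  using G_poset unfolding finite_G_poset_def by blast

lemma act_act_inv [simp]: "y \<in> Y \<Longrightarrow> g \<in> carrier G \<Longrightarrow> act (act y g) (inv\<^bsub>G\<^esub> g) = y"
  by (simp flip: act_mult)

lemma act_inv_act [simp]: "y \<in> Y \<Longrightarrow> g \<in> carrier G \<Longrightarrow> act (act y (inv\<^bsub>G\<^esub> g)) g = y"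
  by (simp flip: act_mult)

lemma mem_gorbit_iff: "x \<in> gorbit G act y \<longleftrightarrow> (\<exists>g\<in>carrier G. x = act y g)"
  by (auto simp: gorbit_def)

lemma mem_gorbit_self: "y \<in> Y \<Longrightarrow> y \<in> gorbit G act y"
  using G.one_closed by (force simp: mem_gorbit_iff)

lemma gorbit_act [simp]:
  assumes "y \<in> Y" "g \<in> carrier G"
  shows "gorbit G act (act y g) = gorbit G act y"
proof -
  have "gorbit G act (act y g) = (\<lambda>h. act y (g \<otimes>\<^bsub>G\<^esub> h)) ` carrier G"
    unfolding gorbit_def using assms by (auto simp: act_mult)
  also have "\<dots> = (\<lambda>h. act y h) ` (\<lambda>h. g \<otimes>\<^bsub>G\<^esub> h) ` carrier G"
    by (simp add: image_image)
  finally show ?thesis by (simp add: G.surj_const_mult assms(2) gorbit_def)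
qed

text \<open>Since \<open>G\<close> is finite, \<open>m\<close> has finite order, so \<open>y \<le> y m \<le> y m\<^sup>2 \<le> \<dots>\<close> returns to \<open>y\<close>.\<close>

lemma act_eq_if_le_act:
  assumes y: "y \<in> Y" and m: "m \<in> carrier G" and le: "leq y (act y m)"
  shows "act y m = y"
proof -
  have up: "leq y (act y (m [^]\<^bsub>G\<^esub> k))" for k :: nat
  proof (induction k)
    case (Suc k)
    have mk: "m [^]\<^bsub>G\<^esub> k \<in> carrier G" using m by simp
    have "leq (act y m) (act (act y (m [^]\<^bsub>G\<^esub> k)) m)"
      using act_mono[OF y act_closed[OF y mk] m Suc.IH] .
    also have "act (act y (m [^]\<^bsub>G\<^esub> k)) m = act y (m [^]\<^bsub>G\<^esub> Suc k)"
      using y mk m by (simp add: act_mult)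
    finally show ?case
      using trans[OF y act_closed[OF y m] act_closed[OF y] le] m by simp
  qed (use y refl in simp)
  define k where "k = G.ord m - 1"
  have mk: "m [^]\<^bsub>G\<^esub> k \<in> carrier G" using m by simp
  have "m [^]\<^bsub>G\<^esub> k \<otimes>\<^bsub>G\<^esub> m = \<one>\<^bsub>G\<^esub>"
    using G.ord_ge_1[OF finite_carrier m] m by (simp add: k_def flip: G.nat_pow_Suc)
  then have "leq (act y m) y"
    using act_mono[OF y act_closed[OF y mk] m up[of k]] y m mk by (simp flip: act_mult)
  then show ?thesis using antisym[OF act_closed[OF y m] y] le by blast
qed

lemma act_eq_if_act_le:
  assumes y: "y \<in> Y" and m: "m \<in> carrier G" and le: "leq (act y m) y"
  shows "act y m = y"
proof -
  have "leq y (act y (inv\<^bsub>G\<^esub> m))"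
    using act_mono[OF act_closed[OF y m] y G.inv_closed[OF m] le] y m by simp
  then show ?thesis
    using act_eq_if_le_act[OF y G.inv_closed[OF m]] y m by (metis act_inv_act)
qed

lemma eq_if_comparable_in_gorbit:
  "y \<in> Y \<Longrightarrow> x \<in> gorbit G act y \<Longrightarrow> leq x y \<or> leq y x \<Longrightarrow> x = y"
  using act_eq_if_le_act act_eq_if_act_le by (auto simp: mem_gorbit_iff)

lemma orbit_le_gorbit_iff:
  assumes "x \<in> Y" "y \<in> Y"
  shows "orbit_le leq (gorbit G act x) (gorbit G act y) \<longleftrightarrow> (\<exists>g\<in>carrier G. leq (act x g) y)"
proof
  assume "orbit_le leq (gorbit G act x) (gorbit G act y)"
  then obtain g h where gh: "g \<in> carrier G" "h \<in> carrier G" "leq (act x g) (act y h)"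
    by (auto simp: orbit_le_def mem_gorbit_iff)
  then have "leq (act x (g \<otimes>\<^bsub>G\<^esub> inv\<^bsub>G\<^esub> h)) y"
    using act_mono[OF act_closed[OF assms(1) gh(1)] act_closed[OF assms(2) gh(2)] G.inv_closed[OF gh(2)] gh(3)] assms
    by (simp add: act_mult)
  then show "\<exists>g\<in>carrier G. leq (act x g) y" using gh by blast
next
  assume "\<exists>g\<in>carrier G. leq (act x g) y"
  then obtain g where "g \<in> carrier G" "leq (act x g) y" by blast
  moreover have "act x g \<in> gorbit G act x" using \<open>g \<in> carrier G\<close> by (auto simp: mem_gorbit_iff)
  ultimately show "orbit_le leq (gorbit G act x) (gorbit G act y)"
    using mem_gorbit_self[OF assms(2)] unfolding orbit_le_def by blast
qed

lemma finite_poset_orbits: "finite_poset (gorbit G act ` Y) (orbit_le leq)"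
proof
  fix A B C assume "A \<in> gorbit G act ` Y" "B \<in> gorbit G act ` Y" "C \<in> gorbit G act ` Y"
  then obtain x y z where A: "x \<in> Y" "A = gorbit G act x" and B: "y \<in> Y" "B = gorbit G act y"
    and C: "z \<in> Y" "C = gorbit G act z" by blast
  have "leq (act x \<one>\<^bsub>G\<^esub>) x" using A refl by simp
  then show "orbit_le leq A A" using A G.one_closed orbit_le_gorbit_iff by blast
  show "orbit_le leq A C" if le: "orbit_le leq A B" "orbit_le leq B C"
  proof -
    obtain g h where gh: "g \<in> carrier G" "h \<in> carrier G" "leq (act x g) y" "leq (act y h) z"
      using le A B C orbit_le_gorbit_iff by auto
    have "leq (act x (g \<otimes>\<^bsub>G\<^esub> h)) (act y h)"
      using act_mono[OF act_closed[OF A(1) gh(1)] B(1) gh(2,3)] A gh by (simp add: act_mult)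
    then have "leq (act x (g \<otimes>\<^bsub>G\<^esub> h)) z"
      using trans[OF act_closed act_closed[OF B(1) gh(2)] C(1) _ gh(4)] A(1) gh by blast
    then show ?thesis using A C gh orbit_le_gorbit_iff by blast
  qed
  show "A = B" if le: "orbit_le leq A B" "orbit_le leq B A"
  proof -
    obtain g h where gh: "g \<in> carrier G" "h \<in> carrier G" "leq (act x g) y" "leq (act y h) x"
      using le A B orbit_le_gorbit_iff by auto
    have le1: "leq (act x (g \<otimes>\<^bsub>G\<^esub> h)) (act y h)"
      using act_mono[OF act_closed[OF A(1) gh(1)] B(1) gh(2,3)] A gh by (simp add: act_mult)
    then have "act x (g \<otimes>\<^bsub>G\<^esub> h) = x"
      using act_eq_if_act_le[OF A(1)] trans[OF _ _ A(1) le1 gh(4)] act_closed A B gh by simp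
    then have "act y h = x"
      using antisym[OF act_closed[OF B(1) gh(2)] A(1) gh(4)] le1 by simp
    then show ?thesis using A B gh by (metis gorbit_act)
  qed
qed (use finite in simp)

lemma orbit_le_gorbit: "x \<in> Y \<Longrightarrow> y \<in> Y \<Longrightarrow> leq x y \<Longrightarrow> orbit_le leq (gorbit G act x) (gorbit G act y)"
  unfolding orbit_le_def using mem_gorbit_self by blast

lemma lift_nonempty_chain_of_orbits:
  "C \<in> nonempty_chains (gorbit G act ` Y) (orbit_le leq) \<Longrightarrow>
    \<exists>c\<in>nonempty_chains Y leq. gorbit G act ` c = C"
proof (induction "card C" arbitrary: C rule: less_induct)
  case less
  let ?O = "gorbit G act ` Y"
  interpret O: finite_poset ?O "orbit_le leq" by (rule finite_poset_orbits)
  have C: "C \<subseteq> ?O" "C \<noteq> {}" using less.prems by (auto simp: nonempty_chains_def)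
  obtain M where M: "M \<in> C" and top: "\<forall>A\<in>C. orbit_le leq A M"
    using O.nonempty_chain_has_greatest[OF less.prems] by blast
  obtain m0 where m0: "m0 \<in> Y" "M = gorbit G act m0" using M C(1) by blast
  show ?case
  proof (cases "C = {M}")
    case True
    then show ?thesis using m0 singleton_in_nonempty_chains by blast
  next
    case False
    have "C - {M} \<noteq> {}" using False M by blast
    then have "C - {M} \<in> nonempty_chains ?O (orbit_le leq)"
      using less.prems by (auto simp: nonempty_chains_def)
    moreover have "finite C" using C(1) O.finite by (rule finite_subset)
    then have "card (C - {M}) < card C" using M by (rule card_Diff1_less)
    ultimately obtain c where c: "c \<in> nonempty_chains Y leq" "gorbit G act ` c = C - {M}"
      using less.hyps by blast
    obtain t where t: "t \<in> c" "\<forall>x\<in>c. leq x t" using nonempty_chain_has_greatest[OF c(1)] by blast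
    have tY: "t \<in> Y" using t(1) c(1) by (auto simp: nonempty_chains_def)
    have "orbit_le leq (gorbit G act t) (gorbit G act m0)" using top t(1) c(2) m0(2) by blast
    then obtain g where g: "g \<in> carrier G" "leq (act t g) m0" using orbit_le_gorbit_iff tY m0(1) by blast
    define m where "m = act m0 (inv\<^bsub>G\<^esub> g)"
    have m: "m \<in> Y" "gorbit G act m = M" using m0 g(1) by (simp_all add: m_def act_closed)
    have "leq t m" using act_mono[OF act_closed[OF tY g(1)] m0(1) G.inv_closed[OF g(1)] g(2)] tY g(1)
      by (simp add: m_def)
    have "leq x m" if "x \<in> c" for x
      using trans[of x t m] t(2) that c(1) tY m(1) \<open>leq t m\<close> by (auto simp: nonempty_chains_def)
    then have "insert m c \<in> nonempty_chains Y leq"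
      using c(1) m(1) refl[OF m(1)] by (auto simp: nonempty_chains_def)
    moreover have "gorbit G act ` insert m c = C" using c(2) m(2) M by auto
    ultimately show ?thesis by blast
  qed
qed

lemma image_gorbit_nonempty_chains:
  "(\<lambda>c. gorbit G act ` c) ` nonempty_chains Y leq = nonempty_chains (gorbit G act ` Y) (orbit_le leq)"
proof
  show "(\<lambda>c. gorbit G act ` c) ` nonempty_chains Y leq \<subseteq> nonempty_chains (gorbit G act ` Y) (orbit_le leq)"
  proof
    fix C assume "C \<in> (\<lambda>c. gorbit G act ` c) ` nonempty_chains Y leq"
    then obtain c where c: "c \<noteq> {}" "c \<subseteq> Y" "\<forall>a\<in>c. \<forall>b\<in>c. leq a b \<or> leq b a"
      and C: "C = gorbit G act ` c"
      by (auto simp: nonempty_chains_def)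
    have "orbit_le leq (gorbit G act a) (gorbit G act b) \<or> orbit_le leq (gorbit G act b) (gorbit G act a)"
      if "a \<in> c" "b \<in> c" for a b
      using c(2,3) that orbit_le_gorbit by (meson subsetD)
    moreover have "C \<noteq> {}" "C \<subseteq> gorbit G act ` Y" using c(1,2) C by auto
    ultimately show "C \<in> nonempty_chains (gorbit G act ` Y) (orbit_le leq)"
      unfolding nonempty_chains_def C by blast
  qed
  show "nonempty_chains (gorbit G act ` Y) (orbit_le leq) \<subseteq> (\<lambda>c. gorbit G act ` c) ` nonempty_chains Y leq"
    using lift_nonempty_chain_of_orbits by blast
qed

lemma act_agree_on_subchain:
  assumes "c' \<subseteq> c" "c \<in> nonempty_chains Y leq" "g \<in> carrier G" "h \<in> carrier G"
    and "(\<lambda>y. act y g) ` c' \<subseteq> (\<lambda>y. act y h) ` c \<or> (\<lambda>y. act y h) ` c \<subseteq> (\<lambda>y. act y g) ` c'"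
  shows "\<forall>y\<in>c'. act y g = act y h"
proof -
  have c: "c \<subseteq> Y" "\<forall>a\<in>c. \<forall>b\<in>c. leq a b \<or> leq b a" using assms(2) by (auto simp: nonempty_chains_def)
  have inj: "z = w" if "z \<in> c" "w \<in> c" "act z g = act w h" for z w
  proof -
    have "z \<in> Y" "w \<in> Y" using that(1,2) c(1) by auto
    then have "w = act z (g \<otimes>\<^bsub>G\<^esub> inv\<^bsub>G\<^esub> h)" using that(3) assms(3,4) by (simp add: act_mult)
    then have "w \<in> gorbit G act z" using assms(3,4) by (auto simp: mem_gorbit_iff)
    then show ?thesis using eq_if_comparable_in_gorbit c that(1,2) by blast
  qed
  show ?thesis
  proof
    fix y assume y: "y \<in> c'"
    from assms(5) show "act y g = act y h"
    proof
      assume "(\<lambda>y. act y g) ` c' \<subseteq> (\<lambda>y. act y h) ` c"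
      then obtain w where "w \<in> c" "act y g = act w h" using y by blast
      then show ?thesis using inj[of y w] y assms(1) by auto
    next
      assume "(\<lambda>y. act y h) ` c \<subseteq> (\<lambda>y. act y g) ` c'"
      then obtain z where "z \<in> c'" "act y h = act z g" using y assms(1) by blast
      then show ?thesis using inj[of z y] y assms(1) by auto
    qed
  qed
qed

lemma propB_nonempty_chain:
  assumes "propB G Y leq act" and c: "c \<in> nonempty_chains Y leq" and gs: "gs ` c \<subseteq> carrier G"
    and "(\<lambda>y. act y (gs y)) ` c \<in> nonempty_chains Y leq"
  shows "\<exists>g\<in>carrier G. \<forall>y\<in>c. act y (gs y) = act y g"
proof -
  have "finite c" using c finite finite_subset by (auto simp: nonempty_chains_def)
  then obtain n :: nat and v where v: "c = v ` {i. i < n}" using finite_imp_nat_seg_image_inj_on by blast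
  have "c \<noteq> {}" using c by (simp add: nonempty_chains_def)
  then have "n \<noteq> 0" using v by (metis empty_Collect_eq image_empty not_less_zero)
  then have n: "{i. i < n} = {..n - 1}" by auto
  have vc: "v i \<in> c" if "i \<le> n - 1" for i using that v n by blast
  have cY: "\<forall>a\<in>c. a \<in> Y \<and> gs a \<in> carrier G" and cc: "\<forall>a\<in>c. \<forall>b\<in>c. leq a b \<or> leq b a"
    and cc': "\<forall>a\<in>c. \<forall>b\<in>c. leq (act a (gs a)) (act b (gs b)) \<or> leq (act b (gs b)) (act a (gs a))"
    using c gs assms(4) by (auto simp: nonempty_chains_def)
  have "\<exists>g\<in>carrier G. \<forall>i\<le>n - 1. act (v i) ((gs \<circ> v) i) = act (v i) g"
  proof (rule assms(1)[unfolded propB_def, rule_format], intro conjI allI impI)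
    fix i j assume "i \<le> n - 1" "j \<le> n - 1"
    then have "v i \<in> c" "v j \<in> c" using vc by blast+
    then show "leq (v i) (v j) \<or> leq (v j) (v i)"
      "leq (act (v i) ((gs \<circ> v) i)) (act (v j) ((gs \<circ> v) j)) \<or>
       leq (act (v j) ((gs \<circ> v) j)) (act (v i) ((gs \<circ> v) i))"
      using cc cc' by simp_all
  next
    fix i assume "i \<le> n - 1"
    then have "v i \<in> c" by (rule vc)
    then show "v i \<in> Y" "(gs \<circ> v) i \<in> carrier G" using cY by simp_all
  qed
  then show ?thesis unfolding v n by auto
qed

lemma image_act_nonempty_chain:
  assumes "c \<in> nonempty_chains Y leq" "g \<in> carrier G"
  shows "(\<lambda>y. act y g) ` c \<in> nonempty_chains Y leq"
proof -
  have c: "c \<noteq> {}" "c \<subseteq> Y" "\<forall>a\<in>c. \<forall>b\<in>c. leq a b \<or> leq b a"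
    using assms(1) by (auto simp: nonempty_chains_def)
  then have "leq (act a g) (act b g) \<or> leq (act b g) (act a g)" if "a \<in> c" "b \<in> c" for a b
    using act_mono[OF _ _ assms(2)] that by blast
  then show ?thesis using c act_closed[OF _ assms(2)] by (auto simp: nonempty_chains_def)
qed

end

section \<open>Subdivisions of G-posets\<close>

definition subdivision :: "'a sdv set \<Rightarrow> ('a \<Rightarrow> 'a \<Rightarrow> bool) \<Rightarrow> 'a sdv set" where
  "subdivision Y leq = {Chn c | c. fset c \<in> nonempty_chains Y (sdle leq)}"

lemma sdiv_Suc_eq_subdivision: "sdiv (Suc n) X leq = subdivision (sdiv n X leq) leq"
  by (simp add: subdivision_def nonempty_chains_def)

locale sdv_G_poset = G_poset G Y "sdle leq" "sdact act"
  for G :: "('g, 'm) monoid_scheme" and Y :: "'a sdv set"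
    and leq :: "'a \<Rightarrow> 'a \<Rightarrow> bool" and act :: "'a \<Rightarrow> 'g \<Rightarrow> 'a"
begin

lemma fset_Abs_fset_nonempty_chain: "A \<in> nonempty_chains Y (sdle leq) \<Longrightarrow> fset (Abs_fset A) = A"
  using finite finite_subset by (intro Abs_fset_inverse) (auto simp: nonempty_chains_def)

lemma subdivision_eq_image: "subdivision Y leq = (\<lambda>A. Chn (Abs_fset A)) ` nonempty_chains Y (sdle leq)"
  unfolding subdivision_def
proof (intro equalityI subsetI)
  fix z assume "z \<in> {Chn c |c. fset c \<in> nonempty_chains Y (sdle leq)}"
  then obtain c where "z = Chn c" "fset c \<in> nonempty_chains Y (sdle leq)" by blast
  then show "z \<in> (\<lambda>A. Chn (Abs_fset A)) ` nonempty_chains Y (sdle leq)"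
    by (metis fset_inverse image_eqI)
next
  fix z assume "z \<in> (\<lambda>A. Chn (Abs_fset A)) ` nonempty_chains Y (sdle leq)"
  then obtain A where "A \<in> nonempty_chains Y (sdle leq)" "z = Chn (Abs_fset A)" by blast
  then show "z \<in> {Chn c |c. fset c \<in> nonempty_chains Y (sdle leq)}"
    using fset_Abs_fset_nonempty_chain by auto
qed

lemma finite_subdivision: "finite (subdivision Y leq)"
  using finite_poset.finite[OF finite_poset_nonempty_chains[OF finite]] by (simp add: subdivision_eq_image)

lemma finite_G_poset_subdivision: "finite_G_poset G (subdivision Y leq) (sdle leq) (sdact act)"
  unfolding finite_G_poset_def
proof (intro conjI ballI impI)
  show "group G" "finite (carrier G)" by (rule G.group_axioms, rule finite_carrier)
  show "finite (subdivision Y leq)" by (rule finite_subdivision)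
next
  fix z g assume "z \<in> subdivision Y leq" "g \<in> carrier G"
  then show "sdact act z g \<in> subdivision Y leq"
    using image_act_nonempty_chain by (auto simp: subdivision_def fimage.rep_eq)
next
  fix z assume "z \<in> subdivision Y leq"
  then obtain c where c: "z = Chn c" "fset c \<subseteq> Y" by (auto simp: subdivision_def nonempty_chains_def)
  have "(\<lambda>y. sdact act y \<one>\<^bsub>G\<^esub>) |`| c = c"
    by (subst fset_inject[symmetric]) (use c(2) in \<open>auto simp: fimage.rep_eq subset_iff\<close>)
  then show "sdact act z \<one>\<^bsub>G\<^esub> = z" using c(1) by simp
  show "sdle leq z z" using c(1) by simp
  fix g h assume "g \<in> carrier G" "h \<in> carrier G"
  then have "(\<lambda>y. sdact act y (g \<otimes>\<^bsub>G\<^esub> h)) |`| c = (\<lambda>y. sdact act y h) |`| (\<lambda>y. sdact act y g) |`| c"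
    by (subst fset_inject[symmetric]) (use c(2) in \<open>auto simp: fimage.rep_eq act_mult subset_iff\<close>)
  then show "sdact act z (g \<otimes>\<^bsub>G\<^esub> h) = sdact act (sdact act z g) h" using c(1) by simp
next
  fix z w assume "z \<in> subdivision Y leq" "w \<in> subdivision Y leq" "sdle leq z w \<and> sdle leq w z"
  then show "z = w" by (auto simp: subdivision_def)
next
  fix z w u assume "z \<in> subdivision Y leq" "w \<in> subdivision Y leq" "u \<in> subdivision Y leq"
    "sdle leq z w \<and> sdle leq w u"
  then show "sdle leq z u" by (auto simp: subdivision_def)
next
  fix z w g assume "z \<in> subdivision Y leq" "w \<in> subdivision Y leq" "g \<in> carrier G" "sdle leq z w"
  moreover obtain c d where "z = Chn c" "w = Chn d"
    using \<open>z \<in> subdivision Y leq\<close> \<open>w \<in> subdivision Y leq\<close> unfolding subdivision_def by blast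
  ultimately show "sdle leq (sdact act z g) (sdact act w g)"
    by (simp add: fimage.rep_eq less_eq_fset.rep_eq image_mono)
qed

lemma G_poset_subdivision: "G_poset G (subdivision Y leq) (sdle leq) (sdact act)"
  by (rule G_poset.intro[OF finite_G_poset_subdivision])

text \<open>Distinct elements of a chain lie in distinct orbits, so the largest of the chains \<open>v i\<close>
  fixes the translating element for all of them.\<close>

lemma propB_subdivision: "propB G (subdivision Y leq) (sdle leq) (sdact act)"
  unfolding propB_def
proof (intro allI impI)
  interpret S: G_poset G "subdivision Y leq" "sdle leq" "sdact act" by (rule G_poset_subdivision)
  fix n and v :: "nat \<Rightarrow> 'a sdv" and gs :: "nat \<Rightarrow> 'g"
  assume H: "(\<forall>i\<le>n. v i \<in> subdivision Y leq \<and> gs i \<in> carrier G) \<and>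
    (\<forall>i\<le>n. \<forall>j\<le>n. sdle leq (v i) (v j) \<or> sdle leq (v j) (v i)) \<and>
    (\<forall>i\<le>n. \<forall>j\<le>n. sdle leq (sdact act (v i) (gs i)) (sdact act (v j) (gs j)) \<or>
                    sdle leq (sdact act (v j) (gs j)) (sdact act (v i) (gs i)))"
  have vS: "v i \<in> subdivision Y leq" and gs: "gs i \<in> carrier G" if "i \<le> n" for i
    using H that by blast+
  have "v ` {..n} \<in> nonempty_chains (subdivision Y leq) (sdle leq)"
    using H by (auto simp: nonempty_chains_def)
  then obtain t where "t \<in> v ` {..n}" "\<forall>x\<in>v ` {..n}. sdle leq x t"
    using S.nonempty_chain_has_greatest by blast
  then obtain k where k: "k \<le> n" "\<forall>i\<le>n. sdle leq (v i) (v k)" by auto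
  have "sdact act (v i) (gs i) = sdact act (v i) (gs k)" if i: "i \<le> n" for i
  proof -
    obtain ci ck where ci: "v i = Chn ci" and ck: "v k = Chn ck" "fset ck \<in> nonempty_chains Y (sdle leq)"
      using vS[OF i] vS[OF k(1)] unfolding subdivision_def by blast
    have "fset ci \<subseteq> fset ck" using k(2) i ci ck(1) by (metis less_eq_fset.rep_eq sdle.simps(2))
    moreover have "sdle leq (sdact act (v i) (gs i)) (sdact act (v k) (gs k)) \<or>
        sdle leq (sdact act (v k) (gs k)) (sdact act (v i) (gs i))"
      using H i k(1) by blast
    then have "(\<lambda>y. sdact act y (gs i)) ` fset ci \<subseteq> (\<lambda>y. sdact act y (gs k)) ` fset ck \<or>
        (\<lambda>y. sdact act y (gs k)) ` fset ck \<subseteq> (\<lambda>y. sdact act y (gs i)) ` fset ci"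
      using ci ck(1) by (simp add: fimage.rep_eq less_eq_fset.rep_eq)
    ultimately have "\<forall>y\<in>fset ci. sdact act y (gs i) = sdact act y (gs k)"
      using act_agree_on_subchain[OF _ ck(2) gs[OF i] gs[OF k(1)]] by blast
    then show ?thesis using ci by (simp cong: fimage_cong)
  qed
  then show "\<exists>g\<in>carrier G. \<forall>i\<le>n. sdact act (v i) (gs i) = sdact act (v i) g"
    using gs[OF k(1)] by blast
qed

text \<open>Property (B) turns element-wise translations of \<open>c\<close> into \<open>d\<close> into a single one.\<close>

lemma orbit_le_subdivision_iff:
  assumes "propB G Y (sdle leq) (sdact act)"
    and c: "fset c \<in> nonempty_chains Y (sdle leq)" and d: "fset d \<in> nonempty_chains Y (sdle leq)"
  shows "orbit_le (sdle leq) (gorbit G (sdact act) (Chn c)) (gorbit G (sdact act) (Chn d))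
    \<longleftrightarrow> gorbit G (sdact act) ` fset c \<subseteq> gorbit G (sdact act) ` fset d"
    (is "?le \<longleftrightarrow> ?orb ` fset c \<subseteq> ?orb ` fset d")
proof -
  interpret S: G_poset G "subdivision Y leq" "sdle leq" "sdact act" by (rule G_poset_subdivision)
  have cd: "Chn c \<in> subdivision Y leq" "Chn d \<in> subdivision Y leq"
    using c d by (auto simp: subdivision_def)
  have cY: "fset c \<subseteq> Y" and dY: "fset d \<subseteq> Y" using c d by (auto simp: nonempty_chains_def)
  have "?le \<longleftrightarrow> (\<exists>g\<in>carrier G. (\<lambda>y. sdact act y g) ` fset c \<subseteq> fset d)"
    using S.orbit_le_gorbit_iff[OF cd] by (simp add: fimage.rep_eq less_eq_fset.rep_eq)
  also have "\<dots> \<longleftrightarrow> ?orb ` fset c \<subseteq> ?orb ` fset d"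
  proof
    assume "\<exists>g\<in>carrier G. (\<lambda>y. sdact act y g) ` fset c \<subseteq> fset d"
    then obtain g where g: "g \<in> carrier G" "(\<lambda>y. sdact act y g) ` fset c \<subseteq> fset d" by blast
    have "?orb y = ?orb (sdact act y g)" if "y \<in> fset c" for y
      using that cY g(1) by auto
    then show "?orb ` fset c \<subseteq> ?orb ` fset d" using g(2) by blast
  next
    assume sub: "?orb ` fset c \<subseteq> ?orb ` fset d"
    have "\<exists>h\<in>carrier G. sdact act y h \<in> fset d" if y: "y \<in> fset c" for y
    proof -
      obtain w where w: "w \<in> fset d" "?orb y = ?orb w" using sub y by blast
      then have "w \<in> ?orb y" using mem_gorbit_self dY by auto
      then show ?thesis using w(1) by (auto simp: mem_gorbit_iff)
    qed
    then obtain gs where gs: "\<forall>y\<in>fset c. gs y \<in> carrier G \<and> sdact act y (gs y) \<in> fset d"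
      by metis
    have "(\<lambda>y. sdact act y (gs y)) ` fset c \<in> nonempty_chains Y (sdle leq)"
      using gs c d by (auto simp: nonempty_chains_def)
    then obtain g where "g \<in> carrier G" "\<forall>y\<in>fset c. sdact act y (gs y) = sdact act y g"
      using propB_nonempty_chain[OF assms(1) c] gs by blast
    then show "\<exists>g\<in>carrier G. (\<lambda>y. sdact act y g) ` fset c \<subseteq> fset d" using gs by auto
  qed
  finally show ?thesis .
qed

lemma homeomorphic_orbit_space_subdivision:
  assumes "propB G Y (sdle leq) (sdact act)"
  shows "orbit_space G (sdact act) (subdivision Y leq) (sdle leq) homeomorphic_space
    poset_topology (nonempty_chains (gorbit G (sdact act) ` Y) (orbit_le (sdle leq))) (\<subseteq>)"
proof -
  interpret S: G_poset G "subdivision Y leq" "sdle leq" "sdact act" by (rule G_poset_subdivision)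
  let ?K = "nonempty_chains Y (sdle leq)" and ?orb = "gorbit G (sdact act)"
  have "orbit_le (sdle leq) (?orb (Chn (Abs_fset A))) (?orb (Chn (Abs_fset B))) \<longleftrightarrow> ?orb ` A \<subseteq> ?orb ` B"
    if "A \<in> ?K" "B \<in> ?K" for A B
    using orbit_le_subdivision_iff[OF assms, of "Abs_fset A" "Abs_fset B"] that
    by (simp add: fset_Abs_fset_nonempty_chain)
  then have "poset_topology ((\<lambda>A. ?orb (Chn (Abs_fset A))) ` ?K) (orbit_le (sdle leq))
      homeomorphic_space poset_topology ((\<lambda>A. ?orb ` A) ` ?K) (\<subseteq>)"
    using S.finite_poset_orbits poset_on_subset_order
    by (intro homeomorphic_poset_topology_images) (simp_all add: finite_poset_def subdivision_eq_image image_image)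
  then show ?thesis by (simp add: orbit_space_def subdivision_eq_image image_image image_gorbit_nonempty_chains)
qed

theorem contractible_orbit_space_subdivision_iff:
  assumes "propB G Y (sdle leq) (sdact act)"
  shows "contractible_space (orbit_space G (sdact act) (subdivision Y leq) (sdle leq))
    \<longleftrightarrow> contractible_space (orbit_space G (sdact act) Y (sdle leq))"
  using homeomorphic_space_contractibility[OF homeomorphic_orbit_space_subdivision[OF assms]]
    finite_poset.contractible_space_nonempty_chains_iff[OF finite_poset_orbits]
  by (simp add: orbit_space_def)

end

lemma sdv_G_posetI: "finite_G_poset G Y (sdle leq) (sdact act) \<Longrightarrow> sdv_G_poset G Y leq act"
  by (simp add: sdv_G_poset_def G_poset_def)

lemma finite_G_poset_Pt:
  assumes "finite_G_poset G X leq act"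
  shows "finite_G_poset G (Pt ` X) (sdle leq) (sdact act)"
proof -
  have "inj Pt" by (simp add: inj_def)
  then have "finite (Pt ` X) \<longleftrightarrow> finite X" "Pt a \<in> Pt ` X \<longleftrightarrow> a \<in> X" for a
    by (metis finite_image_iff inj_on_subset subset_UNIV, metis inj_image_mem_iff)
  then have "finite_G_poset G (Pt ` X) (sdle leq) (sdact act) \<longleftrightarrow> finite_G_poset G X leq act"
    unfolding finite_G_poset_def by (simp add: Ball_image_comp o_def)
  then show ?thesis using assms by blast
qed

lemma propB_Pt:
  fixes G :: "('g, 'm) monoid_scheme" and X :: "'a set" and act :: "'a \<Rightarrow> 'g \<Rightarrow> 'a"
  assumes "propB G X leq act"
  shows "propB G (Pt ` X) (sdle leq) (sdact act)"
  unfolding propB_def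
proof (intro allI impI)
  fix n and v :: "nat \<Rightarrow> 'a sdv" and gs :: "nat \<Rightarrow> 'g"
  assume H: "(\<forall>i\<le>n. v i \<in> Pt ` X \<and> gs i \<in> carrier G) \<and>
    (\<forall>i\<le>n. \<forall>j\<le>n. sdle leq (v i) (v j) \<or> sdle leq (v j) (v i)) \<and>
    (\<forall>i\<le>n. \<forall>j\<le>n. sdle leq (sdact act (v i) (gs i)) (sdact act (v j) (gs j)) \<or>
                    sdle leq (sdact act (v j) (gs j)) (sdact act (v i) (gs i)))"
  have "\<forall>i. \<exists>a. i \<le> n \<longrightarrow> v i = Pt a \<and> a \<in> X" using H by blast
  then obtain u where u: "\<forall>i\<le>n. v i = Pt (u i) \<and> u i \<in> X" by metis
  have "\<exists>g\<in>carrier G. \<forall>i\<le>n. act (u i) (gs i) = act (u i) g"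
    using assms unfolding propB_def
  proof (elim allE[of _ n] allE[of _ u] allE[of _ gs] mp)
    show "(\<forall>i\<le>n. u i \<in> X \<and> gs i \<in> carrier G) \<and>
      (\<forall>i\<le>n. \<forall>j\<le>n. leq (u i) (u j) \<or> leq (u j) (u i)) \<and>
      (\<forall>i\<le>n. \<forall>j\<le>n. leq (act (u i) (gs i)) (act (u j) (gs j)) \<or>
                      leq (act (u j) (gs j)) (act (u i) (gs i)))"
      using H u by auto
  qed
  then show "\<exists>g\<in>carrier G. \<forall>i\<le>n. sdact act (v i) (gs i) = sdact act (v i) g" using u by auto
qed

lemma homeomorphic_orbit_space_Pt:
  assumes "finite_G_poset G X leq act"
  shows "orbit_space G (sdact act) (Pt ` X) (sdle leq) homeomorphic_space orbit_space G act X leq"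
proof -
  interpret X: G_poset G X leq act by (rule G_poset.intro[OF assms])
  interpret P: G_poset G "Pt ` X" "sdle leq" "sdact act" by (rule G_poset.intro[OF finite_G_poset_Pt[OF assms]])
  have orbit_Pt: "gorbit G (sdact act) (Pt a) = Pt ` gorbit G act a" for a
    by (auto simp: gorbit_def)
  have "orbit_le (sdle leq) (Pt ` A) (Pt ` B) \<longleftrightarrow> orbit_le leq A B" for A B
    by (auto simp: orbit_le_def)
  then have "poset_topology ((gorbit G (sdact act) \<circ> Pt) ` X) (orbit_le (sdle leq))
      homeomorphic_space poset_topology (gorbit G act ` X) (orbit_le leq)"
    using P.finite_poset_orbits X.finite_poset_orbits
    by (intro homeomorphic_poset_topology_images) (simp_all add: finite_poset_def image_comp orbit_Pt)
  then show ?thesis by (simp add: orbit_space_def image_comp)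
qed

lemma finite_G_poset_sdiv:
  assumes "finite_G_poset G X leq act"
  shows "finite_G_poset G (sdiv n X leq) (sdle leq) (sdact act)"
proof (induction n)
  case 0
  then show ?case using finite_G_poset_Pt[OF assms] by simp
next
  case (Suc n)
  then show ?case
    unfolding sdiv_Suc_eq_subdivision by (rule sdv_G_poset.finite_G_poset_subdivision[OF sdv_G_posetI])
qed

lemma propB_sdiv:
  assumes "finite_G_poset G X leq act" and "n \<ge> 1"
  shows "propB G (sdiv n X leq) (sdle leq) (sdact act)"
proof -
  obtain m where n: "n = Suc m" using assms(2) by (cases n) auto
  show ?thesis
    unfolding n sdiv_Suc_eq_subdivision
    by (rule sdv_G_poset.propB_subdivision[OF sdv_G_posetI[OF finite_G_poset_sdiv[OF assms(1)]]])
qed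

theorem corollary2p11:
  fixes G :: "('g, 'm) monoid_scheme" and X :: "'a set"
    and leq :: "'a \<Rightarrow> 'a \<Rightarrow> bool" and act :: "'a \<Rightarrow> 'g \<Rightarrow> 'a" and n :: nat
  assumes "finite_G_poset G X leq act" and "n \<ge> 1"
  shows "(contractible_space (orbit_space G (sdact act) (sdiv n X leq) (sdle leq))
            \<longleftrightarrow> contractible_space (orbit_space G (sdact act) (sdiv 1 X leq) (sdle leq)))
       \<and> (propB G X leq act \<longrightarrow>
           (contractible_space (orbit_space G (sdact act) (sdiv n X leq) (sdle leq))
              \<longleftrightarrow> contractible_space (orbit_space G act X leq)))"
proof -
  let ?P = "\<lambda>k. contractible_space (orbit_space G (sdact act) (sdiv k X leq) (sdle leq))"
  have step: "?P (Suc k) \<longleftrightarrow> ?P k" if "propB G (sdiv k X leq) (sdle leq) (sdact act)" for k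
    unfolding sdiv_Suc_eq_subdivision
    by (rule sdv_G_poset.contractible_orbit_space_subdivision_iff[OF
        sdv_G_posetI[OF finite_G_poset_sdiv[OF assms(1)]] that])
  have "?P n \<longleftrightarrow> ?P 1"
    using assms(2)
  proof (induction n rule: nat_induct_at_least)
    case (Suc m)
    then show ?case using step[OF propB_sdiv[OF assms(1) Suc.hyps(1)]] by simp
  qed simp
  moreover have "?P 1 \<longleftrightarrow> contractible_space (orbit_space G act X leq)" if "propB G X leq act"
    using step[of 0] propB_Pt[OF that] homeomorphic_orbit_space_Pt[OF assms(1)]
      homeomorphic_space_contractibility
    by auto
  ultimately show ?thesis by blast
qed

end
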